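(* Let $N_T\geq 1$ be an integer, let $m=2(N_T+2)$ and $n=N_T+2+m$. Let $\tilde A_0,\tilde A_1,\dots,\tilde A_{N_T},\tilde\gamma_0,\tilde\gamma_1,\dots,\tilde\gamma_{N_T+1}$ be arbitrary real numbers and let $r\in\mathbb{R}$, $r\neq 0$. Then there exist $\gamma>0$ and a unitary $n\times n$ complex matrix $M=(M_{i,j})_{i,j=0}^{n-1}$ of the following form: with $A_j:=\gamma\tilde A_j$ ($0\le j\le N_T$) and $\gamma_i:=\gamma\tilde\gamma_i$ ($0\le i\le N_T+1$), - $M_{0,j}=A_j$ for $0\le j\le N_T$; - for $0\le k\le N_T$ and $0\le j\le N_T$: $M_{k+1,j}=0$ if $j=k$, and $M_{k+1,j}=-r\,A_j$ if $j\neq k$; - $M_{i,N_T+1}=\gamma_i$ for $0\le i\le N_T+1$; - all remaining entries (those with $i\geq N_T+2$ or $j\geq N_T+2$) are unconstrained complex numbers.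
   Context: Interpretation: rows/columns $0,1,\dots,N_T+1$ correspond to the basis states $|E\rangle,|\tau_0\rangle,\dots,|\tau_{N_T}\rangle$ of a clock and the last $m$ indices to stationary ancilla states $|A_1\rangle,\dots,|A_m\rangle$; the prescribed entries encode the conditions that the outcomes corresponding to $A_0,\dots,A_{N_T}$ are counterfactual outcomes, with $r=\cos\theta/\sin\theta$ and probabilities $|\cos\theta\, A_l|^2$. The proposition asserts existence of such a counterfactual clock with $m=2(N_T+2)$ ancillas for arbitrarily many distinguishable times. *)

theory Defs
  imports "HOL-Analysis.Analysis"
begin

text \<open>An n x n complex matrix represented as a function on indices 0..n-1
  (entries outside that range are irrelevant). Unitary: M M^* = I and M^* M = I.\<close>
definition unitary_fn :: "nat \<Rightarrow> (nat \<Rightarrow> nat \<Rightarrow> complex) \<Rightarrow> bool" where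
  "unitary_fn n M \<longleftrightarrow>
     (\<forall>i<n. \<forall>j<n. (\<Sum>k<n. M i k * cnj (M j k)) = (if i = j then 1 else 0)) \<and>
     (\<forall>i<n. \<forall>j<n. (\<Sum>k<n. cnj (M k i) * M k j) = (if i = j then 1 else 0))"

end

(*
  The prescribed entries form a real (N_T+2) x (N_T+2) block C, which after scaling by gamma has
  Frobenius norm below 1. Then I - C^T C is positive definite, so by Cholesky it equals W^T W,
  and the stacked matrix V = [C; W] has orthonormal columns. Every n x p matrix V with
  orthonormal columns is the left part of the orthogonal matrix [[V, I - V V^T], [0, V^T]] of
  size n + p. This yields a real orthogonal, hence unitary, matrix of size 3 (N_T+2) with top-left
  block gamma C.
*)

theory Submission
  imports Defs "Jordan_Normal_Form.Determinant"
begin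

definition gram :: "nat \<Rightarrow> (nat \<Rightarrow> nat \<Rightarrow> real) \<Rightarrow> nat \<Rightarrow> nat \<Rightarrow> real" where
  "gram n V i j = (\<Sum>k<n. V k i * V k j)"

definition orthonormal_columns :: "nat \<Rightarrow> nat \<Rightarrow> (nat \<Rightarrow> nat \<Rightarrow> real) \<Rightarrow> bool" where
  "orthonormal_columns n p V \<longleftrightarrow> (\<forall>i<p. \<forall>j<p. gram n V i j = (if i = j then 1 else 0))"

definition col_projection :: "nat \<Rightarrow> (nat \<Rightarrow> nat \<Rightarrow> real) \<Rightarrow> nat \<Rightarrow> nat \<Rightarrow> real" where
  "col_projection p V i j = (\<Sum>l<p. V i l * V j l)"

definition quad_form :: "nat \<Rightarrow> (nat \<Rightarrow> nat \<Rightarrow> real) \<Rightarrow> (nat \<Rightarrow> real) \<Rightarrow> real" where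
  "quad_form p G x = (\<Sum>i<p. \<Sum>j<p. x i * G i j * x j)"

definition pos_definite :: "nat \<Rightarrow> (nat \<Rightarrow> nat \<Rightarrow> real) \<Rightarrow> bool" where
  "pos_definite p G \<longleftrightarrow> (\<forall>i<p. \<forall>j<p. G i j = G j i) \<and>
     (\<forall>x. (\<exists>i<p. x i \<noteq> 0) \<longrightarrow> quad_form p G x > 0)"

lemma sum_lessThan_add:
  fixes f :: "nat \<Rightarrow> 'a::comm_monoid_add"
  shows "(\<Sum>k<m + n. f k) = (\<Sum>k<m. f k) + (\<Sum>k<n. f (m + k))"
  by (induction n) (simp_all add: add.assoc)

lemma gram_commute: "gram n V i j = gram n V j i"
  by (simp add: gram_def mult.commute)

lemma col_projection_commute: "col_projection p V i j = col_projection p V j i"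
  by (simp add: col_projection_def mult.commute)

lemma orthonormal_columns_square_rows:
  assumes "orthonormal_columns N N R"
  shows "orthonormal_columns N N (\<lambda>i j. R j i)"
proof -
  define A :: "real mat" where "A = mat N N (\<lambda>(i, j). R j i)"
  define B :: "real mat" where "B = mat N N (\<lambda>(i, j). R i j)"
  have carrier: "A \<in> carrier_mat N N" "B \<in> carrier_mat N N"
    by (simp_all add: A_def B_def)
  have "A * B = 1\<^sub>m N"
    using assms by (intro eq_matI)
      (auto simp: A_def B_def scalar_prod_def atLeast0LessThan orthonormal_columns_def gram_def)
  then have BA: "B * A = 1\<^sub>m N"
    by (rule mat_mult_left_right_inverse[OF carrier])
  show ?thesis
    unfolding orthonormal_columns_def
  proof (intro allI impI)
    fix i j assume "i < N" "j < N"
    then show "gram N (\<lambda>i j. R j i) i j = (if i = j then 1 else 0)"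
      using arg_cong[OF BA, of "\<lambda>X. X $$ (i, j)"]
      by (simp add: A_def B_def scalar_prod_def atLeast0LessThan gram_def)
  qed
qed

lemma orthonormal_columns_imp_unitary:
  assumes "orthonormal_columns N N R"
  shows "unitary_fn N (\<lambda>i j. complex_of_real (R i j))"
  using assms orthonormal_columns_square_rows[OF assms]
  unfolding unitary_fn_def orthonormal_columns_def gram_def
  by (simp flip: of_real_mult of_real_sum)

lemma col_projection_sum_swap:
  "(\<Sum>k<n. col_projection p V k i * u k) = (\<Sum>l<p. V i l * (\<Sum>k<n. V k l * u k))"
  by (simp add: col_projection_def sum_distrib_left sum_distrib_right mult_ac sum.swap[of _ "{..<n}"])

lemma col_projection_fixes_columns:
  assumes "orthonormal_columns n p V" and "j < p"
  shows "(\<Sum>k<n. col_projection p V k i * V k j) = V i j"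
proof -
  have "(\<Sum>k<n. col_projection p V k i * V k j) = (\<Sum>l<p. V i l * (if l = j then 1 else 0))"
    using assms unfolding col_projection_sum_swap
    by (intro sum.cong) (auto simp: orthonormal_columns_def gram_def)
  also have "\<dots> = V i j"
    using assms(2) by (simp add: if_distrib[of "\<lambda>x. _ * x"] cong: if_cong)
  finally show ?thesis .
qed

lemma col_projection_idem:
  assumes "orthonormal_columns n p V"
  shows "(\<Sum>k<n. col_projection p V k i * col_projection p V k j) = col_projection p V i j"
  using col_projection_fixes_columns[OF assms]
  by (simp add: col_projection_sum_swap mult.commute[of "V _ _" "col_projection _ _ _ _"])
    (simp add: col_projection_def)

lemma orthonormal_columns_extend_square:
  assumes V: "orthonormal_columns n p V"
  obtains R where "orthonormal_columns (n + p) (n + p) R"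
    and "\<And>i j. i < n \<Longrightarrow> j < p \<Longrightarrow> R i j = V i j"
proof
  let ?P = "col_projection p V"
  let ?\<delta> = "\<lambda>i j. if i = j then 1 else (0::real)"
  define R where "R i j = (if j < p then (if i < n then V i j else 0)
      else if i < n then ?\<delta> i (j - p) - ?P i (j - p) else V (j - p) (i - n))" for i j
  show "R i j = V i j" if "i < n" "j < p" for i j
    using that by (simp add: R_def)
  have gram_split: "gram (n + p) R a b = (\<Sum>k<n. R k a * R k b) + (\<Sum>k<p. R (n + k) a * R (n + k) b)"
    for a b by (simp add: gram_def sum_lessThan_add)
  have range_orth: "(\<Sum>k<n. V k b * (?\<delta> k a - ?P k a)) = 0" if "a < n" "b < p" for a b
    using that col_projection_fixes_columns[OF V \<open>b < p\<close>, of a]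
    by (simp add: right_diff_distrib sum_subtractf if_distrib[of "\<lambda>x. _ * x"] mult.commute
        cong: if_cong)
  have complement_idem: "(\<Sum>k<n. (?\<delta> k a - ?P k a) * (?\<delta> k b - ?P k b)) = ?\<delta> a b - ?P a b"
    if "a < n" "b < n" for a b
    using that col_projection_idem[OF V, of a b] col_projection_commute[of p V a b]
    by (simp add: left_diff_distrib right_diff_distrib sum_subtractf mult_if_delta
        if_distrib[of "\<lambda>x. _ * x"] cong: if_cong)
  have "gram (n + p) R a b = ?\<delta> a b" if "a < n + p" "b < n + p" "a \<le> b" for a b
  proof (cases "b < p")
    case True
    then show ?thesis
      using V that unfolding gram_split by (simp add: R_def orthonormal_columns_def gram_def)
  next
    case False
    define b' where "b' = b - p"
    have b': "b = p + b'" "b' < n"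
      using False that by (simp_all add: b'_def)
    show ?thesis
    proof (cases "a < p")
      case True
      then have "gram (n + p) R a b = (\<Sum>k<n. V k a * (?\<delta> k b' - ?P k b'))"
        using b' by (simp add: gram_split R_def)
      then show ?thesis using range_orth True b' by simp
    next
      case False
      define a' where "a' = a - p"
      have a': "a = p + a'" "a' < n"
        using False that by (simp_all add: a'_def)
      have "gram (n + p) R a b
          = (\<Sum>k<n. (?\<delta> k a' - ?P k a') * (?\<delta> k b' - ?P k b')) + ?P a' b'"
        using a' b' by (simp add: gram_split R_def col_projection_def)
      then show ?thesis using complement_idem a' b' by simp
    qed
  qed
  then show "orthonormal_columns (n + p) (n + p) R"
    unfolding orthonormal_columns_def by (metis gram_commute linorder_le_cases)
qed

lemma pos_definite_diag_pos:
  assumes "pos_definite p G" and "i < p"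
  shows "G i i > 0"
proof -
  have "quad_form p G (\<lambda>k. if k = i then 1 else 0) > 0"
    using assms unfolding pos_definite_def by auto
  then show ?thesis
    using assms(2)
    by (simp add: quad_form_def if_distrib[of "\<lambda>x. x * _"] if_distrib[of "\<lambda>x. _ * x"] cong: if_cong)
qed

lemma quad_form_Suc:
  "quad_form (Suc p) G z = z 0 * G 0 0 * z 0 + (\<Sum>j<p. z 0 * G 0 (Suc j) * z (Suc j))
     + (\<Sum>i<p. z (Suc i) * G (Suc i) 0 * z 0) + quad_form p (\<lambda>i j. G (Suc i) (Suc j)) (\<lambda>i. z (Suc i))"
  by (simp add: quad_form_def sum.lessThan_Suc_shift sum.distrib del: sum.lessThan_Suc)

lemma pos_definite_schur_complement:
  assumes G: "pos_definite (Suc p) G"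
  shows "pos_definite p (\<lambda>i j. G (Suc i) (Suc j) - G 0 (Suc i) * G 0 (Suc j) / G 0 0)"
    (is "pos_definite p ?S")
proof -
  define a where "a = G 0 0"
  have a: "a > 0"
    using pos_definite_diag_pos[OF G] by (simp add: a_def)
  have sym: "G i j = G j i" if "i < Suc p" "j < Suc p" for i j
    using G that by (simp add: pos_definite_def)
  have "quad_form p ?S x > 0" if nz: "\<exists>i<p. x i \<noteq> 0" for x
  proof -
    define Q where "Q = quad_form p (\<lambda>i j. G (Suc i) (Suc j)) x"
    define s where "s = (\<Sum>i<p. G 0 (Suc i) * x i)"
    \<comment> \<open>the first coordinate minimises the form for fixed x, which leaves the Schur complement\<close>
    define z where "z i = (if i = 0 then - s / a else x (i - 1))" for i
    have "\<exists>i<Suc p. z i \<noteq> 0"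
      using nz by (auto simp: z_def)
    then have "quad_form (Suc p) G z > 0"
      using G by (simp add: pos_definite_def)
    have row: "(\<Sum>j<p. z 0 * G 0 (Suc j) * z (Suc j)) = z 0 * s"
      by (simp add: s_def z_def sum_distrib_left mult.assoc)
    have col: "(\<Sum>i<p. z (Suc i) * G (Suc i) 0 * z 0) = z 0 * s"
      unfolding s_def sum_distrib_left by (intro sum.cong) (auto simp: z_def sym[of _ 0])
    have "quad_form (Suc p) G z = z 0 * a * z 0 + 2 * (z 0 * s) + Q"
      unfolding quad_form_Suc row col by (simp add: a_def Q_def z_def)
    also have "\<dots> = Q - s * s / a"
      using a by (simp add: z_def field_simps)
    also have "s * s / a = quad_form p (\<lambda>i j. G 0 (Suc i) * G 0 (Suc j) / a) x"
      by (simp add: quad_form_def s_def sum_product sum_divide_distrib mult_ac)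
    also have "Q - \<dots> = quad_form p ?S x"
      by (simp add: Q_def quad_form_def a_def right_diff_distrib left_diff_distrib sum_subtractf)
    finally show ?thesis
      using \<open>quad_form (Suc p) G z > 0\<close> by simp
  qed
  then show ?thesis
    using G by (auto simp: pos_definite_def)
qed

lemma pos_definite_gram_factorization:
  "pos_definite p G \<Longrightarrow> \<exists>W. \<forall>i<p. \<forall>j<p. gram p W i j = G i j"
proof (induction p arbitrary: G)
  case 0
  then show ?case by simp
next
  case (Suc p)
  define a where "a = G 0 0"
  have a: "a > 0"
    using pos_definite_diag_pos[OF Suc.prems] by (simp add: a_def)
  obtain W where W: "\<forall>i<p. \<forall>j<p. gram p W i j = G (Suc i) (Suc j) - G 0 (Suc i) * G 0 (Suc j) / a"
    using Suc.IH[OF pos_definite_schur_complement[OF Suc.prems]] unfolding a_def by blast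
  define W' where "W' k i = (if k = 0 then G 0 i / sqrt a else if i = 0 then 0 else W (k - 1) (i - 1))"
    for k i
  have "gram (Suc p) W' i j = G i j" if "i < Suc p" "j < Suc p" for i j
  proof -
    have split: "gram (Suc p) W' i j = G 0 i * G 0 j / a + (\<Sum>k<p. W' (Suc k) i * W' (Suc k) j)"
      using a by (simp add: gram_def sum.lessThan_Suc_shift W'_def del: sum.lessThan_Suc)
    consider "i = 0" | "j = 0" | i' j' where "i = Suc i'" "j = Suc j'"
      by (meson not0_implies_Suc)
    then show ?thesis
    proof cases
      case 1
      then show ?thesis
        using a split by (simp add: W'_def a_def)
    next
      case 2
      then show ?thesis
        using a split Suc.prems that by (simp add: W'_def a_def pos_definite_def)
    next
      case 3
      then have "(\<Sum>k<p. W' (Suc k) i * W' (Suc k) j) = gram p W i' j'"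
        by (simp add: W'_def gram_def)
      then show ?thesis
        using W that 3 split by simp
    qed
  qed
  then show ?case by blast
qed

lemma quad_form_identity_minus_gram:
  "quad_form p (\<lambda>i j. (if i = j then 1 else 0) - gram n C i j) x
     = (\<Sum>i<p. (x i)\<^sup>2) - (\<Sum>k<n. (\<Sum>i<p. C k i * x i)\<^sup>2)"
proof -
  have "quad_form p (gram n C) x = (\<Sum>i<p. \<Sum>j<p. \<Sum>k<n. (C k i * x i) * (C k j * x j))"
    by (simp add: quad_form_def gram_def sum_distrib_left sum_distrib_right mult_ac)
  also have "\<dots> = (\<Sum>i<p. \<Sum>k<n. \<Sum>j<p. (C k i * x i) * (C k j * x j))"
    by (intro sum.cong refl sum.swap)
  also have "\<dots> = (\<Sum>k<n. \<Sum>i<p. \<Sum>j<p. (C k i * x i) * (C k j * x j))"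
    by (rule sum.swap)
  also have "\<dots> = (\<Sum>k<n. (\<Sum>i<p. C k i * x i)\<^sup>2)"
    by (simp add: power2_eq_square sum_product)
  finally have "quad_form p (gram n C) x = \<dots>" .
  moreover have "quad_form p (\<lambda>i j. if i = j then 1 else 0) x = (\<Sum>i<p. (x i)\<^sup>2)"
    by (simp add: quad_form_def power2_eq_square if_distrib[of "\<lambda>x. x * _"]
        if_distrib[of "\<lambda>x. _ * x"] cong: if_cong)
  ultimately show ?thesis
    by (simp add: quad_form_def right_diff_distrib left_diff_distrib sum_subtractf)
qed

lemma pos_definite_identity_minus_gram:
  assumes small: "(\<Sum>k<n. \<Sum>i<p. (C k i)\<^sup>2) < 1"
  shows "pos_definite p (\<lambda>i j. (if i = j then 1 else 0) - gram n C i j)"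
  unfolding pos_definite_def
proof (intro conjI allI impI)
  fix i j
  show "(if i = j then 1 else 0) - gram n C i j = (if j = i then 1 else 0) - gram n C j i"
    by (simp add: gram_commute[of n C i j])
next
  fix x :: "nat \<Rightarrow> real"
  assume "\<exists>i<p. x i \<noteq> 0"
  define X where "X = (\<Sum>i<p. (x i)\<^sup>2)"
  have "X > 0"
    using \<open>\<exists>i<p. x i \<noteq> 0\<close> unfolding X_def by (auto intro: sum_pos2)
  have "(\<Sum>k<n. (\<Sum>i<p. C k i * x i)\<^sup>2) \<le> (\<Sum>k<n. (\<Sum>i<p. (C k i)\<^sup>2) * X)"
    unfolding X_def by (intro sum_mono Cauchy_Schwarz_ineq_sum)
  also have "\<dots> < X"
    using small \<open>X > 0\<close> by (simp add: flip: sum_distrib_right)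
  finally show "quad_form p (\<lambda>i j. (if i = j then 1 else 0) - gram n C i j) x > 0"
    by (simp add: quad_form_identity_minus_gram X_def)
qed

lemma frobenius_lt_1_embeds_in_unitary:
  fixes C :: "nat \<Rightarrow> nat \<Rightarrow> real"
  assumes "(\<Sum>k<n. \<Sum>i<p. (C k i)\<^sup>2) < 1"
  obtains M where "unitary_fn (n + p + p) M"
    and "\<And>i j. i < n \<Longrightarrow> j < p \<Longrightarrow> M i j = complex_of_real (C i j)"
proof -
  obtain W where W: "\<forall>i<p. \<forall>j<p. gram p W i j = (if i = j then 1 else 0) - gram n C i j"
    using pos_definite_gram_factorization[OF pos_definite_identity_minus_gram[OF assms]] by blast
  define V where "V k i = (if k < n then C k i else W (k - n) i)" for k i
  have "orthonormal_columns (n + p) p V"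
    using W by (simp add: orthonormal_columns_def gram_def sum_lessThan_add V_def)
  then obtain R where R: "orthonormal_columns (n + p + p) (n + p + p) R"
    and RV: "\<And>i j. i < n + p \<Longrightarrow> j < p \<Longrightarrow> R i j = V i j"
    using orthonormal_columns_extend_square by blast
  show ?thesis
    by (rule that[OF orthonormal_columns_imp_unitary[OF R]]) (simp add: RV V_def)
qed

theorem proposition2:
  fixes NT :: nat and At gt :: "nat \<Rightarrow> real" and r :: real
  assumes "NT \<ge> 1" and "r \<noteq> 0"
  shows "\<exists>\<gamma>::real. \<gamma> > 0 \<and> (\<exists>M :: nat \<Rightarrow> nat \<Rightarrow> complex.
           unitary_fn (NT + 2 + 2 * (NT + 2)) M \<and>
           (\<forall>j\<le>NT. M 0 j = complex_of_real (\<gamma> * At j)) \<and>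
           (\<forall>k\<le>NT. \<forall>j\<le>NT. M (k + 1) j =
               (if j = k then 0 else complex_of_real (- r * (\<gamma> * At j)))) \<and>
           (\<forall>i\<le>NT + 1. M i (NT + 1) = complex_of_real (\<gamma> * gt i)))"
proof -
  define p where "p = NT + 2"
  define C where "C i j = (if j = NT + 1 then gt i else if i = 0 then At j
     else if j = i - 1 then 0 else - r * At j)" for i j
  define K where "K = (\<Sum>k<p. \<Sum>i<p. (C k i)\<^sup>2)"
  define \<gamma> where "\<gamma> = 1 / sqrt (K + 1)"
  have "K \<ge> 0"
    by (simp add: K_def sum_nonneg)
  then have "\<gamma> > 0" and \<gamma>_sq: "\<gamma>\<^sup>2 = 1 / (K + 1)"
    by (simp_all add: \<gamma>_def power_divide)
  have "(\<Sum>k<p. \<Sum>i<p. (\<gamma> * C k i)\<^sup>2) = \<gamma>\<^sup>2 * K"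
    by (simp add: K_def power_mult_distrib sum_distrib_left)
  also have "\<dots> < 1"
    using \<open>K \<ge> 0\<close> by (simp add: \<gamma>_sq)
  finally have small: "(\<Sum>k<p. \<Sum>i<p. (\<gamma> * C k i)\<^sup>2) < 1" .
  obtain M where "unitary_fn (p + p + p) M"
    and M: "\<And>i j. i < p \<Longrightarrow> j < p \<Longrightarrow> M i j = complex_of_real (\<gamma> * C i j)"
    using frobenius_lt_1_embeds_in_unitary[OF small] by blast
  have "NT + 2 + 2 * (NT + 2) = p + p + p"
    by (simp add: p_def)
  with \<open>unitary_fn (p + p + p) M\<close> have "unitary_fn (NT + 2 + 2 * (NT + 2)) M"
    by simp
  moreover have "\<forall>j\<le>NT. M 0 j = complex_of_real (\<gamma> * At j)"
    by (simp add: M p_def C_def)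
  moreover have "\<forall>k\<le>NT. \<forall>j\<le>NT. M (k + 1) j =
      (if j = k then 0 else complex_of_real (- r * (\<gamma> * At j)))"
    by (simp add: M p_def C_def)
  moreover have "\<forall>i\<le>NT + 1. M i (NT + 1) = complex_of_real (\<gamma> * gt i)"
    by (simp add: M p_def C_def)
  ultimately show ?thesis
    using \<open>\<gamma> > 0\<close> by blast
qed

end
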